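(* Let $d_1,\dots,d_n$ be positive integers and let $a_1,\dots,a_n\in\mathbb{F}_q^*$. Let $$N_0^*=\#\{(x_1,\dots,x_n)\in(\mathbb{F}_q^* )^n : a_1x_1^{d_1}+\cdots+a_nx_n^{d_n}=0\}.$$ Then $$\left|N_0^*-\frac1q(q-1)^n\right|\le\frac{q-1}{q}+\sum_{e=0}^{n-1}\ \sum_{1\le i_{e+1}<\cdots<i_n\le n}\ \sum_{\substack{1\le l_{i_j}\le d_{i_j}-1\ (e+1\le j\le n)\\ \frac{l_{i_{e+1}}}{d_{i_{e+1}}}+\cdots+\frac{l_{i_n}}{d_{i_n}}\in\mathbb{Z}}}(q-1)\,q^{\frac{n-e}{2}-1},$$ where the innermost sum counts tuples $(l_{i_{e+1}},\dots,l_{i_n})$ of integers with the indicated properties. *)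

theory Defs
  imports Complex_Main "HOL-Library.FuncSet"
begin

text \<open>Finite field F_q is modelled by a type 'a of class finite and field; q = CARD('a).
  Indices are 0-based: i < n.\<close>

definition N0star :: "nat \<Rightarrow> (nat \<Rightarrow> 'a::{finite,field}) \<Rightarrow> (nat \<Rightarrow> nat) \<Rightarrow> nat" where
  "N0star n a d = card {x \<in> Pi\<^sub>E {..<n} (\<lambda>_. UNIV - {0::'a}).
                         (\<Sum>i<n. a i * x i ^ d i) = 0}"

definition Ltuples :: "(nat \<Rightarrow> nat) \<Rightarrow> nat set \<Rightarrow> (nat \<Rightarrow> nat) set" where
  "Ltuples d S = {l \<in> Pi\<^sub>E S (\<lambda>i. {1..d i - 1}).
                   (\<Sum>i\<in>S. real (l i) / real (d i)) \<in> \<int>}"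

end

(*
  Let q = |F|, m = q - 1, fix a nontrivial additive character psi of F and a generator g of F^*,
  and let chi_j (g^k) = zeta^(j k) with zeta a primitive m-th root of unity. By orthogonality of
  psi, q N0* = sum over t in F of the character sums sum_x psi (t (a_1 x_1^d_1 + ... + a_n x_n^d_n)).
  The term t = 0 gives m^n. For t <> 0 the sum factors over the coordinates, and each factor
  sum_(y <> 0) psi (t a_i y^d_i) expands into Gauss sums G(j) over the j < m with (chi_j)^d_i = 1.
  Summing over t then keeps exactly the exponent tuples (j_i) with m | sum j_i. Since |G(j)| = sqrt q
  for j <> 0 and G(0) = -1, a tuple supported on T contributes at most m sqrt(q)^|T|; the map
  j_i |-> j_i d_i / m embeds the tuples supported on T into the tuples (l_i) counted in the theorem,
  and the zero tuple gives the term (q - 1)/q.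
*)

theory Submission
  imports Defs "HOL-Algebra.Algebraic_Closure_Type" "HOL-Algebra.Multiplicative_Group"
    "HOL-Number_Theory.Cong" "HOL-Library.Real_Mod" "HOL-Library.Cardinality"
begin

lemma power_mod_eq_if_power_eq_1:
  fixes x :: "'a::monoid_mult"
  assumes "x ^ n = 1"
  shows "x ^ (k mod n) = x ^ k"
proof -
  have "x ^ k = (x ^ n) ^ (k div n) * x ^ (k mod n)"
    by (metis mult_div_mod_eq power_add power_mult)
  then show ?thesis using assms by simp
qed

lemma cis_root_of_unity_power_eq_1_iff:
  assumes "N > 0"
  shows "cis (2 * pi / real N) ^ k = 1 \<longleftrightarrow> N dvd k"
proof -
  have "cis (2 * pi / real N) ^ k = 1 \<longleftrightarrow> (\<exists>z. real k / real N = of_int z)"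
    using assms by (simp add: DeMoivre cis_eq_1_iff field_simps)
  also have "\<dots> \<longleftrightarrow> N dvd k"
  proof
    assume "\<exists>z. real k / real N = of_int z"
    then obtain z where "real k = real N * of_int z" using assms by (auto simp: field_simps)
    then have "int k = int N * z" by (metis of_int_eq_iff of_int_mult of_int_of_nat_eq)
    then show "N dvd k" by (metis dvdI int_dvd_int_iff)
  next
    assume "N dvd k"
    then show "\<exists>z. real k / real N = of_int z"
      using assms by (auto intro!: exI[of _ "int (k div N)"] simp: real_of_nat_div)
  qed
  finally show ?thesis .
qed

lemma sum_root_of_unity_powers:
  assumes "N > 0"
  shows "(\<Sum>k<N. cis (2 * pi / real N) ^ (j * k)) = (if N dvd j then of_nat N else 0)"
proof -
  define z where "z = cis (2 * pi / real N) ^ j"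
  have sum_eq: "(\<Sum>k<N. cis (2 * pi / real N) ^ (j * k)) = (\<Sum>k<N. z ^ k)"
    by (simp add: z_def power_mult)
  show ?thesis
  proof (cases "N dvd j")
    case True
    then have "z = 1" unfolding z_def using cis_root_of_unity_power_eq_1_iff[OF assms] by simp
    then show ?thesis using True sum_eq by simp
  next
    case False
    then have "z \<noteq> 1" unfolding z_def using cis_root_of_unity_power_eq_1_iff[OF assms] by simp
    moreover have "z ^ N = 1"
      unfolding z_def using cis_root_of_unity_power_eq_1_iff[OF assms, of "j * N"]
      by (simp add: power_mult[symmetric] mult.commute)
    ultimately show ?thesis using False sum_eq by (simp add: geometric_sum)
  qed
qed

lemma card_finite_field_ge_2: "card (UNIV :: 'a::{finite,field} set) \<ge> 2"
proof -
  have "card {0, 1::'a} \<le> CARD('a)" by (rule card_mono) simp_all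
  then show ?thesis by simp
qed

lemma finite_field_power_card_minus_1:
  fixes x :: "'a::{finite,field}"
  assumes "x \<noteq> 0"
  shows "x ^ (CARD('a) - 1) = 1"
proof -
  let ?U = "UNIV - {0::'a}"
  have "(\<Prod>y\<in>?U. x * y) = (\<Prod>y\<in>?U. y)"
    by (rule prod.reindex_bij_witness[of _ "\<lambda>y. y / x" "\<lambda>y. x * y"]) (use assms in auto)
  moreover have "(\<Prod>y\<in>?U. x * y) = x ^ card ?U * (\<Prod>y\<in>?U. y)"
    by (simp add: prod.distrib)
  moreover have "(\<Prod>y\<in>?U. y) \<noteq> 0" by simp
  ultimately show ?thesis by (simp add: card_Diff_singleton)
qed

lemma finite_field_generator_exists:
  "\<exists>g::'a::{finite,field}. g \<noteq> 0 \<and> bij_betw (\<lambda>k. g ^ k) {..<CARD('a) - 1} (UNIV - {0})"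
proof -
  let ?R = "ring_of_type_algebra :: 'a ring"
  interpret field ?R by (rule field_from_type_algebra)
  have power_eq: "x [^]\<^bsub>?R\<^esub> k = x ^ k" for x :: 'a and k :: nat
    by (induction k) (simp_all add: ring_of_type_algebra_def)
  have "finite (carrier ?R)" by simp
  from finite_field_mult_group_has_gen[OF this]
  obtain g where g: "g \<in> carrier (Multiplicative_Group.mult_of ?R)"
    and powers: "carrier (Multiplicative_Group.mult_of ?R) = {g [^]\<^bsub>?R\<^esub> k | k::nat. k \<in> UNIV}"
    by blast
  have carrier_eq: "carrier (Multiplicative_Group.mult_of ?R) = UNIV - {0}"
    by (simp add: ring_of_type_algebra_def)
  have "g \<noteq> 0" using g carrier_eq by blast
  have units: "UNIV - {0} = range (\<lambda>k::nat. g ^ k)"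
    using powers unfolding carrier_eq power_eq by auto
  define m where "m = CARD('a) - 1"
  have "g ^ m = 1" unfolding m_def by (rule finite_field_power_card_minus_1) fact
  have "(\<lambda>k. g ^ k) ` {..<m} = UNIV - {0}"
  proof
    show "UNIV - {0} \<subseteq> (\<lambda>k. g ^ k) ` {..<m}"
    proof
      fix x :: 'a assume "x \<in> UNIV - {0}"
      then obtain k where "x = g ^ k" unfolding units by blast
      then have "x = g ^ (k mod m)" using power_mod_eq_if_power_eq_1[OF \<open>g ^ m = 1\<close>] by simp
      moreover have "k mod m < m" using card_finite_field_ge_2[where 'a='a] by (simp add: m_def)
      ultimately show "x \<in> (\<lambda>k. g ^ k) ` {..<m}" by blast
    qed
  qed (use \<open>g \<noteq> 0\<close> in auto)
  moreover have "card (UNIV - {0::'a}) = m" by (simp add: m_def card_Diff_singleton)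
  ultimately have "bij_betw (\<lambda>k. g ^ k) {..<m} (UNIV - {0})"
    by (simp add: bij_betw_def eq_card_imp_inj_on)
  with \<open>g \<noteq> 0\<close> show ?thesis unfolding m_def by blast
qed

lemma prime_CHAR_finite_field: "prime CHAR('a::{finite,field})"
  by (rule prime_CHAR_semidom) (simp add: finite_imp_CHAR_pos)

lemma of_nat_mod_CHAR: "of_nat (n mod CHAR('a)) = (of_nat n :: 'a::semiring_1_cancel)"
  by (simp add: of_nat_eq_iff_cong_CHAR cong_def)

lemma of_nat_inverse_exists:
  assumes "\<not> CHAR('a) dvd k"
  shows "\<exists>k'. of_nat k * of_nat k' = (1::'a::{finite,field})"
proof -
  have "coprime k CHAR('a)"
    using assms prime_CHAR_finite_field[where 'a='a] by (metis coprime_commute prime_imp_coprime)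
  then obtain k' where "[k * k' = Suc 0] (mod CHAR('a))" using cong_solve_coprime_nat by blast
  then have "of_nat (k * k') = (of_nat (Suc 0)::'a)" by (simp only: of_nat_eq_iff_cong_CHAR)
  then show ?thesis by auto
qed

definition additive_submonoid :: "'a::monoid_add set \<Rightarrow> bool" where
  "additive_submonoid H \<longleftrightarrow> 0 \<in> H \<and> (\<forall>x\<in>H. \<forall>y\<in>H. x + y \<in> H)"

lemma additive_submonoid_of_nat_mult:
  fixes H :: "'a::semiring_1 set"
  assumes "additive_submonoid H" and "x \<in> H"
  shows "of_nat k * x \<in> H"
  using assms by (induction k) (auto simp: additive_submonoid_def distrib_right)

lemma additive_submonoid_uminus:
  fixes H :: "'a::ring_1 set"
  assumes "CHAR('a) > 0" and "additive_submonoid H" and "x \<in> H"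
  shows "- x \<in> H"
proof -
  have "of_nat (CHAR('a) - 1) = (- 1::'a)" using assms(1) by (simp add: of_nat_diff)
  then have "- x = of_nat (CHAR('a) - 1) * x" by simp
  then show ?thesis using additive_submonoid_of_nat_mult[OF assms(2,3)] by simp
qed

lemma additive_submonoid_extend:
  fixes H :: "'a::semiring_1 set"
  assumes "additive_submonoid H"
  shows "additive_submonoid {h + of_nat k * y | h k. h \<in> H}"
  unfolding additive_submonoid_def
proof (intro conjI ballI)
  show "0 \<in> {h + of_nat k * y | h k. h \<in> H}"
    using assms by (auto simp: additive_submonoid_def intro!: exI[of _ 0])
  fix a b assume "a \<in> {h + of_nat k * y | h k. h \<in> H}" "b \<in> {h + of_nat k * y | h k. h \<in> H}"
  then obtain h1 k1 h2 k2 where "a = h1 + of_nat k1 * y" "b = h2 + of_nat k2 * y" "h1 \<in> H" "h2 \<in> H"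
    by blast
  then show "a + b \<in> {h + of_nat k * y | h k. h \<in> H}"
    using assms unfolding additive_submonoid_def
    by (intro CollectI exI[of _ "h1 + h2"] exI[of _ "k1 + k2"]) (auto simp: algebra_simps)
qed

lemma maximal_additive_submonoid_complement:
  fixes H :: "'a::{finite,field} set"
  assumes H: "additive_submonoid H" "1 \<notin> H"
    and H_max: "\<And>K. additive_submonoid K \<Longrightarrow> 1 \<notin> K \<Longrightarrow> H \<subseteq> K \<Longrightarrow> K = H"
  shows "\<exists>c<CHAR('a). y - of_nat c \<in> H"
proof (cases "y \<in> H")
  case True
  then show ?thesis using finite_imp_CHAR_pos[where 'a='a] by (intro exI[of _ 0]) auto
next
  case False
  define K where "K = {h + of_nat k * y | h k. h \<in> H}"
  have "H \<subseteq> K" unfolding K_def by (force intro: exI[of _ 0])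
  moreover have "y \<in> K" unfolding K_def using H(1)
    by (intro CollectI exI[of _ 0] exI[of _ 1]) (simp add: additive_submonoid_def)
  ultimately have "1 \<in> K"
    using H_max[of K] additive_submonoid_extend[OF H(1)] False unfolding K_def by blast
  \<comment> \<open>\<open>1 = h + k y\<close> with \<open>h \<in> H\<close>, so \<open>y \<equiv> 1/k\<close> modulo \<open>H\<close>, where \<open>1/k\<close> lies in the prime field\<close>
  then obtain h k where hk: "1 = h + of_nat k * y" "h \<in> H" unfolding K_def by auto
  have "\<not> CHAR('a) dvd k"
  proof
    assume "CHAR('a) dvd k"
    then have "of_nat k = (0::'a)" by (simp add: of_nat_eq_0_iff_char_dvd)
    then show False using hk H(2) by simp
  qed
  then obtain k' where k': "of_nat k * of_nat k' = (1::'a)" using of_nat_inverse_exists by blast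
  have "of_nat k' = of_nat k' * (h + of_nat k * y)" using hk(1) by simp
  also have "\<dots> = of_nat k' * h + (of_nat k * of_nat k') * y" by (simp add: algebra_simps)
  finally have "y - of_nat k' = - (of_nat k' * h)" using k' by (simp add: algebra_simps)
  then have "y - of_nat (k' mod CHAR('a)) \<in> H"
    using additive_submonoid_uminus[OF finite_imp_CHAR_pos H(1) additive_submonoid_of_nat_mult[OF H(1) hk(2)]]
    by (simp add: of_nat_mod_CHAR)
  then show ?thesis using finite_imp_CHAR_pos[where 'a='a] by (intro exI[of _ "k' mod CHAR('a)"]) auto
qed

lemma prime_field_complement_exists:
  "\<exists>H::'a::{finite,field} set. additive_submonoid H \<and> (\<forall>x\<in>H. - x \<in> H)
     \<and> (\<forall>c. 0 < c \<longrightarrow> c < CHAR('a) \<longrightarrow> of_nat c \<notin> H)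
     \<and> (\<forall>y. \<exists>c<CHAR('a). y - of_nat c \<in> H)"
proof -
  define HH where "HH = {H::'a set. additive_submonoid H \<and> 1 \<notin> H}"
  have "{0} \<in> HH" unfolding HH_def additive_submonoid_def by simp
  then obtain H where "H \<in> HH" and H_max: "\<And>K. K \<in> HH \<Longrightarrow> H \<subseteq> K \<Longrightarrow> H = K"
    using finite_has_maximal[OF finite, of HH] by blast
  then have H: "additive_submonoid H" "1 \<notin> H" unfolding HH_def by auto
  have "of_nat c \<notin> H" if "0 < c" "c < CHAR('a)" for c
  proof
    assume "of_nat c \<in> H"
    have "\<not> CHAR('a) dvd c" using that by (auto dest: dvd_imp_le)
    then obtain c' where "of_nat c * of_nat c' = (1::'a)" using of_nat_inverse_exists by blast
    then show False
      using additive_submonoid_of_nat_mult[OF H(1) \<open>of_nat c \<in> H\<close>, of c'] H(2) by (simp add: mult.commute)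
  qed
  moreover have "\<exists>c<CHAR('a). y - of_nat c \<in> H" for y
    by (rule maximal_additive_submonoid_complement[OF H]) (use H_max in \<open>auto simp: HH_def\<close>)
  ultimately show ?thesis
    using H additive_submonoid_uminus[OF finite_imp_CHAR_pos H(1)] by (intro exI[of _ H]) auto
qed

lemma additive_residue_map_exists:
  "\<exists>f::'a::{finite,field} \<Rightarrow> nat. (\<forall>x y. f (x + y) = (f x + f y) mod CHAR('a)) \<and> f 1 = 1"
proof -
  let ?p = "CHAR('a)"
  obtain H :: "'a set" where H: "additive_submonoid H" "\<And>x. x \<in> H \<Longrightarrow> - x \<in> H"
    and H_of_nat: "\<And>c. 0 < c \<Longrightarrow> c < ?p \<Longrightarrow> of_nat c \<notin> H"
    and H_rep: "\<And>y. \<exists>c<?p. y - of_nat c \<in> H"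
    using prime_field_complement_exists by blast
  have H_add: "x + y \<in> H" if "x \<in> H" "y \<in> H" for x y
    using H(1) that by (simp add: additive_submonoid_def)
  have le: "c1 \<le> c2" if "c1 < ?p" "y - of_nat c1 \<in> H" "y - of_nat c2 \<in> H" for y c1 c2
  proof (rule ccontr)
    assume "\<not> c1 \<le> c2"
    then have "of_nat (c1 - c2) = (y - of_nat c2) + - (y - of_nat c1)" by (simp add: of_nat_diff)
    moreover have "(y - of_nat c2) + - (y - of_nat c1) \<in> H" using H_add H(2) that by blast
    ultimately have "of_nat (c1 - c2) \<in> H" by simp
    moreover have "0 < c1 - c2" "c1 - c2 < ?p" using \<open>\<not> c1 \<le> c2\<close> that(1) by auto
    ultimately show False using H_of_nat by blast
  qed
  define f where "f y = (THE c. c < ?p \<and> y - of_nat c \<in> H)" for y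
  have f_eq: "f y = c" if "c < ?p" "y - of_nat c \<in> H" for y c
    unfolding f_def using that le by (intro the_equality) (auto intro: antisym)
  have f_rep: "f y < ?p" "y - of_nat (f y) \<in> H" for y
    using H_rep[of y] f_eq by auto
  have "f (x + y) = (f x + f y) mod ?p" for x y
  proof (rule f_eq)
    show "(f x + f y) mod ?p < ?p" using finite_imp_CHAR_pos[where 'a='a] by simp
    have "x + y - of_nat ((f x + f y) mod ?p) = (x - of_nat (f x)) + (y - of_nat (f y))"
      by (simp add: of_nat_mod_CHAR)
    then show "x + y - of_nat ((f x + f y) mod ?p) \<in> H"
      using H_add[OF f_rep(2)[of x] f_rep(2)[of y]] by (simp only:)
  qed
  moreover have "f 1 = 1"
    using prime_gt_1_nat[OF prime_CHAR_finite_field[where 'a='a]] H(1)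
    by (intro f_eq) (simp_all add: additive_submonoid_def)
  ultimately show ?thesis by blast
qed

lemma nontrivial_additive_character_exists:
  "\<exists>psi::'a::{finite,field} \<Rightarrow> complex.
     (\<forall>x y. psi (x + y) = psi x * psi y) \<and> (\<forall>x. norm (psi x) = 1) \<and> psi 1 \<noteq> 1"
proof -
  let ?p = "CHAR('a)"
  obtain f :: "'a \<Rightarrow> nat" where f_add: "\<And>x y. f (x + y) = (f x + f y) mod ?p" and "f 1 = 1"
    using additive_residue_map_exists by blast
  have "?p > 1" using prime_gt_1_nat[OF prime_CHAR_finite_field] by blast
  define z where "z = cis (2 * pi / real ?p)"
  have "z ^ ?p = 1" using cis_root_of_unity_power_eq_1_iff[of ?p ?p] \<open>?p > 1\<close> by (simp add: z_def)
  have "z \<noteq> 1" using cis_root_of_unity_power_eq_1_iff[of ?p 1] \<open>?p > 1\<close> by (simp add: z_def)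
  define psi where "psi y = z ^ f y" for y
  have "psi (x + y) = psi x * psi y" for x y
    unfolding psi_def f_add power_mod_eq_if_power_eq_1[OF \<open>z ^ ?p = 1\<close>] by (rule power_add)
  moreover have "norm (psi x) = 1" for x by (simp add: psi_def z_def norm_power)
  moreover have "psi 1 \<noteq> 1" using \<open>z \<noteq> 1\<close> \<open>f 1 = 1\<close> by (simp add: psi_def)
  ultimately show ?thesis by blast
qed

lemma sum_nonzero_reindex_mult:
  fixes c :: "'a::field"
  assumes "c \<noteq> 0"
  shows "(\<Sum>z\<in>UNIV - {0}. f (c * z)) = (\<Sum>z\<in>UNIV - {0}. f z)"
  by (rule sum.reindex_bij_witness[of _ "\<lambda>z. z / c" "\<lambda>z. c * z"]) (use assms in auto)

lemma sum_reindex_mult: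
  fixes c :: "'a::field"
  assumes "c \<noteq> 0"
  shows "(\<Sum>z\<in>UNIV. f (c * z)) = (\<Sum>z\<in>UNIV. f z)"
  by (rule sum.reindex_bij_witness[of _ "\<lambda>z. z / c" "\<lambda>z. c * z"]) (use assms in auto)

locale additive_character =
  fixes psi :: "'a::{finite,field} \<Rightarrow> complex"
  assumes psi_add: "psi (x + y) = psi x * psi y"
    and norm_psi: "norm (psi x) = 1"
    and psi_1: "psi 1 \<noteq> 1"
begin

lemma psi_0 [simp]: "psi 0 = 1"
proof -
  have "psi 0 * psi 0 = psi 0 * 1" using psi_add[of 0 0] by simp
  moreover have "psi 0 \<noteq> 0" using norm_psi[of 0] by auto
  ultimately show ?thesis by (metis mult_left_cancel)
qed

lemma psi_uminus: "psi (- x) = cnj (psi x)"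
proof -
  have "psi x * psi (- x) = psi x * cnj (psi x)"
    using psi_add[of x "- x"] complex_norm_square[of "psi x"] norm_psi[of x] by simp
  moreover have "psi x \<noteq> 0" using norm_psi[of x] by auto
  ultimately show ?thesis by simp
qed

lemma psi_sum: "psi (\<Sum>i\<in>A. f i) = (\<Prod>i\<in>A. psi (f i))"
  by (induction A rule: infinite_finite_induct) (simp_all add: psi_add)

lemma sum_psi: "(\<Sum>y\<in>UNIV. psi (c * y)) = (if c = 0 then of_nat CARD('a) else 0)"
proof (cases "c = 0")
  case False
  have "(\<Sum>y\<in>UNIV. psi (y + 1)) = (\<Sum>y\<in>UNIV. psi y)"
    by (rule sum.reindex_bij_witness[of _ "\<lambda>z. z - 1" "\<lambda>z. z + 1"]) auto
  then have "(psi 1 - 1) * (\<Sum>y\<in>UNIV. psi y) = 0"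
    by (simp add: psi_add sum_distrib_left algebra_simps)
  then show ?thesis using False psi_1 sum_reindex_mult[OF False, of psi] by simp
qed simp

lemma sum_psi_nonzero:
  "(\<Sum>y\<in>UNIV - {0}. psi (c * y)) = (if c = 0 then of_nat CARD('a) else 0) - 1"
proof -
  have "(\<Sum>y\<in>UNIV. psi (c * y)) = 1 + (\<Sum>y\<in>UNIV - {0}. psi (c * y))"
    using sum.remove[of UNIV 0 "\<lambda>y. psi (c * y)"] by simp
  then show ?thesis unfolding sum_psi by (simp add: eq_diff_eq add.commute)
qed

lemma norm_gauss_sum:
  fixes chi :: "'a \<Rightarrow> complex"
  assumes chi_mult: "\<And>x y. x \<noteq> 0 \<Longrightarrow> y \<noteq> 0 \<Longrightarrow> chi (x * y) = chi x * chi y"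
    and norm_chi: "\<And>x. x \<noteq> 0 \<Longrightarrow> norm (chi x) = 1"
    and sum_chi: "(\<Sum>x\<in>UNIV - {0}. chi x) = 0"
  shows "norm (\<Sum>u\<in>UNIV - {0}. chi u * psi u) = sqrt CARD('a)"
proof -
  let ?G = "\<Sum>u\<in>UNIV - {0}. chi u * psi u"
  have chi_cnj: "chi x * cnj (chi x) = 1" if "x \<noteq> 0" for x
    using complex_norm_square[of "chi x"] norm_chi[OF that] by simp
  have "chi 1 = chi 1 * chi 1" using chi_mult[of 1 1] by simp
  then have "chi 1 = 1" using norm_chi[of 1] by (metis mult_cancel_left2 norm_zero one_neq_zero zero_neq_one)
  have "?G * cnj ?G = (\<Sum>v\<in>UNIV - {0}. \<Sum>u\<in>UNIV - {0}. chi u * psi u * cnj (chi v * psi v))"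
    unfolding cnj_sum sum_product by (rule sum.swap)
  also have "\<dots> = (\<Sum>v\<in>UNIV - {0}. \<Sum>s\<in>UNIV - {0}. chi (v * s) * psi (v * s) * cnj (chi v * psi v))"
  proof (rule sum.cong[OF refl])
    fix v :: 'a assume "v \<in> UNIV - {0}"
    then show "(\<Sum>u\<in>UNIV - {0}. chi u * psi u * cnj (chi v * psi v))
        = (\<Sum>s\<in>UNIV - {0}. chi (v * s) * psi (v * s) * cnj (chi v * psi v))"
      by (intro sum_nonzero_reindex_mult[symmetric]) simp
  qed
  also have "\<dots> = (\<Sum>v\<in>UNIV - {0}. \<Sum>s\<in>UNIV - {0}. chi s * psi ((s - 1) * v))"
  proof (intro sum.cong refl)
    fix v s :: 'a assume "v \<in> UNIV - {0}" "s \<in> UNIV - {0}"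
    then have "chi (v * s) * psi (v * s) * cnj (chi v * psi v)
        = chi s * (chi v * cnj (chi v)) * (psi (v * s) * psi (- v))"
      by (simp add: chi_mult psi_uminus)
    also have "\<dots> = chi s * psi ((s - 1) * v)"
      using \<open>v \<in> _\<close> by (simp add: chi_cnj psi_add[symmetric] algebra_simps)
    finally show "chi (v * s) * psi (v * s) * cnj (chi v * psi v) = chi s * psi ((s - 1) * v)" .
  qed
  also have "\<dots> = (\<Sum>s\<in>UNIV - {0}. chi s * ((if s = 1 then of_nat CARD('a) else 0) - 1))"
    by (subst sum.swap) (simp add: sum_distrib_left[symmetric] sum_psi_nonzero)
  also have "\<dots> = (\<Sum>s\<in>UNIV - {0}. (if s = 1 then of_nat CARD('a) * chi s else 0) - chi s)"
    by (intro sum.cong refl) (simp add: algebra_simps)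
  also have "\<dots> = of_nat CARD('a) * chi 1 - (\<Sum>s\<in>UNIV - {0}. chi s)"
    by (simp add: sum_subtractf sum.delta)
  also have "\<dots> = of_nat CARD('a)" using \<open>chi 1 = 1\<close> sum_chi by simp
  finally have "complex_of_real ((norm ?G)\<^sup>2) = complex_of_real (real CARD('a))"
    by (simp only: complex_norm_square) simp
  then have "(norm ?G)\<^sup>2 = real CARD('a)" by (simp only: of_real_eq_iff)
  then show ?thesis by (metis norm_ge_zero real_sqrt_unique)
qed

end

text \<open>For \<open>m = q - 1\<close>, \<open>j \<in> char_exponents m d\<close> iff the character \<open>chi j\<close> of the cyclic
  group \<open>F\<^sub>q\<^sup>*\<close> below satisfies \<open>(chi j)\<^sup>d = 1\<close>.\<close>

definition char_exponents :: "nat \<Rightarrow> nat \<Rightarrow> nat set" where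
  "char_exponents m d = {j. j < m \<and> m dvd j * d}"

locale finite_field_generator =
  fixes g :: "'a::{finite,field}" and m :: nat
  defines m_def: "m \<equiv> CARD('a) - 1"
  assumes generator_nonzero: "g \<noteq> 0"
    and bij_betw_powers: "bij_betw (\<lambda>k. g ^ k) {..<m} (UNIV - {0})"
begin

lemma m_pos: "m > 0"
  using card_finite_field_ge_2[where 'a='a] by (simp add: m_def)

lemma power_m: "g ^ m = 1"
  unfolding m_def by (rule finite_field_power_card_minus_1[OF generator_nonzero])

definition dlog :: "'a \<Rightarrow> nat" where
  "dlog x = the_inv_into {..<m} (\<lambda>k. g ^ k) x"

lemma dlog_less: "x \<noteq> 0 \<Longrightarrow> dlog x < m"
  using bij_betwE[OF bij_betw_the_inv_into[OF bij_betw_powers]] by (simp add: dlog_def)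

lemma power_dlog: "x \<noteq> 0 \<Longrightarrow> g ^ dlog x = x"
  unfolding dlog_def by (rule f_the_inv_into_f_bij_betw[OF bij_betw_powers]) simp

lemma dlog_power: "dlog (g ^ k) = k mod m"
proof -
  have "dlog (g ^ (k mod m)) = k mod m"
    unfolding dlog_def using bij_betw_imp_inj_on[OF bij_betw_powers] m_pos
    by (intro the_inv_into_f_f) simp_all
  then show ?thesis by (simp add: power_mod_eq_if_power_eq_1[OF power_m])
qed

definition chi :: "nat \<Rightarrow> 'a \<Rightarrow> complex" where
  "chi j x = cis (2 * pi / real m) ^ (j * dlog x)"

lemma norm_chi [simp]: "norm (chi j x) = 1"
  by (simp add: chi_def norm_power)

lemma chi_cnj: "chi j x * cnj (chi j x) = 1"
  using complex_norm_square[of "chi j x"] by simp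

lemma chi_0 [simp]: "chi 0 x = 1"
  by (simp add: chi_def)

lemma chi_sum: "chi (\<Sum>i\<in>A. f i) x = (\<Prod>i\<in>A. chi (f i) x)"
  by (simp add: chi_def sum_distrib_right power_sum)

lemma chi_generator_power: "chi j (g ^ k) = cis (2 * pi / real m) ^ (j * k)"
proof -
  have root: "cis (2 * pi / real m) ^ m = 1"
    using cis_root_of_unity_power_eq_1_iff[OF m_pos] by simp
  have "chi j (g ^ k) = cis (2 * pi / real m) ^ (j * (k mod m) mod m)"
    by (simp add: chi_def dlog_power power_mod_eq_if_power_eq_1[OF root])
  also have "\<dots> = cis (2 * pi / real m) ^ (j * k)"
    by (simp add: mod_mult_right_eq power_mod_eq_if_power_eq_1[OF root])
  finally show ?thesis .
qed

lemma chi_mult: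
  assumes "x \<noteq> 0" "y \<noteq> 0"
  shows "chi j (x * y) = chi j x * chi j y"
proof -
  have "x * y = g ^ (dlog x + dlog y)" using assms by (simp add: power_add power_dlog)
  then have "chi j (x * y) = cis (2 * pi / real m) ^ (j * (dlog x + dlog y))"
    by (simp only: chi_generator_power)
  then show ?thesis by (simp add: chi_def distrib_left power_add)
qed

lemma chi_power:
  assumes "x \<noteq> 0"
  shows "chi j (x ^ d) = chi (j * d) x"
proof -
  have "x ^ d = g ^ (dlog x * d)" using assms by (simp add: power_mult power_dlog)
  then have "chi j (x ^ d) = cis (2 * pi / real m) ^ (j * (dlog x * d))"
    by (simp only: chi_generator_power)
  then show ?thesis by (simp add: chi_def mult_ac)
qed

lemma sum_chi: "(\<Sum>x\<in>UNIV - {0}. chi j x) = (if m dvd j then of_nat m else 0)"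
  using sum.reindex_bij_betw[OF bij_betw_powers, of "chi j"]
  by (simp add: chi_generator_power sum_root_of_unity_powers m_pos)

lemma sum_chi_exponent:
  assumes "u \<noteq> 0" "v \<noteq> 0"
  shows "(\<Sum>j<m. chi j u * cnj (chi j v)) = (if u = v then of_nat m else 0)"
proof -
  have "chi j u * cnj (chi j v) = chi j (u / v)" for j
    using chi_mult[of "u / v" v j] assms chi_cnj[of j v] by (simp add: mult.assoc)
  then have "(\<Sum>j<m. chi j u * cnj (chi j v)) = (\<Sum>j<m. cis (2 * pi / real m) ^ (dlog (u / v) * j))"
    by (simp add: chi_def mult.commute)
  also have "\<dots> = (if m dvd dlog (u / v) then of_nat m else 0)"
    by (rule sum_root_of_unity_powers[OF m_pos])
  also have "m dvd dlog (u / v) \<longleftrightarrow> u = v"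
  proof
    assume "m dvd dlog (u / v)"
    then have "dlog (u / v) = 0" using dlog_less[of "u / v"] assms by (auto dest: dvd_imp_le)
    then show "u = v" using power_dlog[of "u / v"] assms by simp
  qed (use assms dlog_power[of 0] in simp)
  finally show ?thesis .
qed

lemma card_power_fibre:
  assumes "y \<noteq> 0"
  shows "of_nat (card {x \<in> UNIV - {0}. x ^ d = y}) = (\<Sum>j\<in>char_exponents m d. cnj (chi j y))"
proof -
  have "of_nat m * of_nat (card {x \<in> UNIV - {0}. x ^ d = y})
      = (\<Sum>x\<in>UNIV - {0}. if x ^ d = y then of_nat m else (0::complex))"
    by (simp add: sum.If_cases Int_def)
  also have "\<dots> = (\<Sum>x\<in>UNIV - {0}. \<Sum>j<m. chi (j * d) x * cnj (chi j y))"
    by (intro sum.cong refl) (simp add: sum_chi_exponent assms chi_power[symmetric])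
  also have "\<dots> = (\<Sum>j<m. (\<Sum>x\<in>UNIV - {0}. chi (j * d) x) * cnj (chi j y))"
    by (subst sum.swap) (simp add: sum_distrib_right)
  also have "\<dots> = (\<Sum>j<m. if m dvd j * d then of_nat m * cnj (chi j y) else 0)"
    by (intro sum.cong refl) (simp add: sum_chi)
  also have "\<dots> = (\<Sum>j\<in>char_exponents m d. of_nat m * cnj (chi j y))"
    unfolding char_exponents_def by (simp add: sum.inter_filter[symmetric] lessThan_def)
  also have "\<dots> = of_nat m * (\<Sum>j\<in>char_exponents m d. cnj (chi j y))"
    by (rule sum_distrib_left[symmetric])
  finally show ?thesis using m_pos by simp
qed

end

definition admissible_exponents :: "nat \<Rightarrow> nat \<Rightarrow> (nat \<Rightarrow> nat) \<Rightarrow> (nat \<Rightarrow> nat) set" where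
  "admissible_exponents m n d =
     {js \<in> Pi\<^sub>E {..<n} (\<lambda>i. char_exponents m (d i)). m dvd (\<Sum>i<n. js i)}"

definition exponent_support :: "nat \<Rightarrow> (nat \<Rightarrow> nat) \<Rightarrow> nat set" where
  "exponent_support n js = {i. i < n \<and> js i \<noteq> 0}"

lemma finite_char_exponents [simp]: "finite (char_exponents m d)"
  by (simp add: char_exponents_def)

lemma finite_admissible_exponents [simp]: "finite (admissible_exponents m n d)"
  unfolding admissible_exponents_def by (simp add: finite_PiE)

lemma admissible_exponent_support:
  assumes "js \<in> admissible_exponents m n d" and "i \<in> exponent_support n js"
  shows "i < n" "0 < js i" "js i < m" "m dvd js i * d i"
  using assms by (auto simp: admissible_exponents_def exponent_support_def char_exponents_def)

text \<open>The tuple \<open>l\<^sub>i = j\<^sub>i d\<^sub>i / m\<close> satisfies \<open>l\<^sub>i / d\<^sub>i = j\<^sub>i / m\<close>, so \<open>m | \<Sum> j\<^sub>i\<close> turns into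
  \<open>\<Sum> l\<^sub>i / d\<^sub>i \<in> \<int>\<close>.\<close>

lemma admissible_exponent_ratios_in_Ltuples:
  assumes js: "js \<in> admissible_exponents m n d"
    and d: "\<And>i. i \<in> exponent_support n js \<Longrightarrow> d i > 0"
  shows "(\<lambda>i\<in>exponent_support n js. js i * d i div m) \<in> Ltuples d (exponent_support n js)"
proof -
  let ?T = "exponent_support n js"
  note facts = admissible_exponent_support[OF js]
  have range: "js i * d i div m \<in> {1..d i - 1}" if i: "i \<in> ?T" for i
  proof -
    have "m \<le> js i * d i" using facts[OF i] d[OF i] by (intro dvd_imp_le) auto
    then have "0 < js i * d i div m" using facts(2,3)[OF i] by (simp add: div_greater_zero_iff)
    moreover have "js i * d i div m < d i"
      using facts(3)[OF i] d[OF i] by (simp add: div_less_iff_less_mult)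
    ultimately show ?thesis by auto
  qed
  have ratio: "real (js i * d i div m) / real (d i) = real (js i) / real m" if i: "i \<in> ?T" for i
  proof -
    have "real (js i * d i div m) * real m = real (js i) * real (d i)"
      using facts(4)[OF i] by (metis dvd_div_mult_self of_nat_mult)
    then show ?thesis using facts(2,3)[OF i] d[OF i] by (simp add: field_simps)
  qed
  have "(\<Sum>i\<in>?T. real (js i * d i div m) / real (d i)) = real (\<Sum>i\<in>?T. js i) / real m"
    using ratio by (simp add: sum_divide_distrib)
  also have "(\<Sum>i\<in>?T. js i) = (\<Sum>i<n. js i)"
    by (rule sum.mono_neutral_left) (auto simp: exponent_support_def)
  also have "real (\<Sum>i<n. js i) / real m = real ((\<Sum>i<n. js i) div m)"
    using js by (simp add: admissible_exponents_def real_of_nat_div)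
  finally show ?thesis using range unfolding Ltuples_def by auto
qed

lemma card_admissible_exponents_support_le:
  assumes "T \<subseteq> {..<n}" and d: "\<And>i. i \<in> T \<Longrightarrow> d i > 0"
  shows "card {js \<in> admissible_exponents m n d. exponent_support n js = T} \<le> card (Ltuples d T)"
proof (rule card_inj_on_le)
  let ?l = "\<lambda>js. \<lambda>i\<in>T. js i * d i div m"
  show "inj_on ?l {js \<in> admissible_exponents m n d. exponent_support n js = T}"
  proof (rule inj_onI)
    fix x y assume x: "x \<in> {js \<in> admissible_exponents m n d. exponent_support n js = T}"
      and y: "y \<in> {js \<in> admissible_exponents m n d. exponent_support n js = T}" and "?l x = ?l y"
    have multiple: "js i * d i div m * m = js i * d i"
      if "js \<in> admissible_exponents m n d" "i \<in> exponent_support n js" for js i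
      using admissible_exponent_support(4)[OF that] by (rule dvd_div_mult_self)
    show "x = y"
    proof (rule PiE_ext)
      show "x \<in> Pi\<^sub>E {..<n} (\<lambda>i. char_exponents m (d i))" "y \<in> Pi\<^sub>E {..<n} (\<lambda>i. char_exponents m (d i))"
        using x y by (simp_all add: admissible_exponents_def)
      fix i assume "i \<in> {..<n}"
      show "x i = y i"
      proof (cases "i \<in> T")
        case True
        have "x i * d i = x i * d i div m * m" using multiple[of x i] x True by simp
        also have "\<dots> = y i * d i div m * m" using fun_cong[OF \<open>?l x = ?l y\<close>, of i] True by simp
        also have "\<dots> = y i * d i" using multiple[of y i] y True by simp
        finally show ?thesis using d[OF True] by simp
      next
        case False
        then have "i \<notin> exponent_support n x" "i \<notin> exponent_support n y" using x y by auto
        then show ?thesis using \<open>i \<in> {..<n}\<close> by (simp add: exponent_support_def)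
      qed
    qed
  qed
  show "?l ` {js \<in> admissible_exponents m n d. exponent_support n js = T} \<subseteq> Ltuples d T"
  proof (rule image_subsetI)
    fix js assume "js \<in> {js \<in> admissible_exponents m n d. exponent_support n js = T}"
    then have js: "js \<in> admissible_exponents m n d" and T: "exponent_support n js = T" by simp_all
    show "?l js \<in> Ltuples d T"
      using admissible_exponent_ratios_in_Ltuples[OF js] d unfolding T by simp
  qed
  have "finite T" using assms(1) by (rule finite_subset) simp
  then have "finite (Pi\<^sub>E T (\<lambda>i. {1..d i - 1}))" by (simp add: finite_PiE)
  moreover have "Ltuples d T \<subseteq> Pi\<^sub>E T (\<lambda>i. {1..d i - 1})" unfolding Ltuples_def by auto
  ultimately show "finite (Ltuples d T)" by (rule finite_subset[rotated])
qed

lemma card_Ltuples_empty [simp]: "card (Ltuples d {}) = 1"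
  by (simp add: Ltuples_def)

lemma sum_nonempty_subsets_by_card:
  "(\<Sum>T\<in>Pow {..<n} - {{}}. h T) = (\<Sum>e<n. \<Sum>S\<in>{S. S \<subseteq> {..<n} \<and> card S = n - e}. h S)"
proof -
  have card: "0 < card T" "card T \<le> n" if "T \<subseteq> {..<n}" "T \<noteq> {}" for T :: "nat set"
    using that card_mono[OF _ that(1)] finite_subset[OF that(1)] by (auto simp: card_gt_0_iff)
  have "(\<Sum>T\<in>Pow {..<n} - {{}}. h T) = (\<Sum>e<n. \<Sum>T\<in>{T \<in> Pow {..<n} - {{}}. n - card T = e}. h T)"
  proof (rule sum.group[symmetric])
    show "(\<lambda>T. n - card T) ` (Pow {..<n} - {{}}) \<subseteq> {..<n}"
    proof (rule image_subsetI)
      fix T assume "T \<in> Pow {..<n} - {{}}"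
      then show "n - card T \<in> {..<n}" using card[of T] by auto
    qed
  qed simp_all
  also have "\<dots> = (\<Sum>e<n. \<Sum>S\<in>{S. S \<subseteq> {..<n} \<and> card S = n - e}. h S)"
  proof (rule sum.cong[OF refl])
    fix e assume "e \<in> {..<n}"
    have "{T \<in> Pow {..<n} - {{}}. n - card T = e} = {S. S \<subseteq> {..<n} \<and> card S = n - e}"
    proof (rule Set.set_eqI, rule iffI)
      fix T assume "T \<in> {T \<in> Pow {..<n} - {{}}. n - card T = e}"
      then have "T \<subseteq> {..<n}" "T \<noteq> {}" "n - card T = e" by auto
      then show "T \<in> {S. S \<subseteq> {..<n} \<and> card S = n - e}" using card(2)[of T] by auto
    next
      fix S assume "S \<in> {S. S \<subseteq> {..<n} \<and> card S = n - e}"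
      then have "S \<subseteq> {..<n}" "card S = n - e" by auto
      moreover have "S \<noteq> {}" using \<open>card S = n - e\<close> \<open>e \<in> {..<n}\<close> by auto
      ultimately show "S \<in> {T \<in> Pow {..<n} - {{}}. n - card T = e}" using \<open>e \<in> {..<n}\<close> by auto
    qed
    then show "(\<Sum>T\<in>{T \<in> Pow {..<n} - {{}}. n - card T = e}. h T)
        = (\<Sum>S\<in>{S. S \<subseteq> {..<n} \<and> card S = n - e}. h S)" by simp
  qed
  finally show ?thesis .
qed

lemma sum_support_power_le:
  fixes s :: real
  assumes "s \<ge> 0" and d: "\<And>i. i < n \<Longrightarrow> d i > 0"
  shows "(\<Sum>js\<in>admissible_exponents m n d. s ^ card (exponent_support n js))
    \<le> 1 + (\<Sum>e<n. \<Sum>S\<in>{S. S \<subseteq> {..<n} \<and> card S = n - e}. real (card (Ltuples d S)) * s ^ (n - e))"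
proof -
  let ?A = "\<lambda>T. {js \<in> admissible_exponents m n d. exponent_support n js = T}"
  have "(\<Sum>js\<in>admissible_exponents m n d. s ^ card (exponent_support n js))
      = (\<Sum>T\<in>Pow {..<n}. \<Sum>js\<in>?A T. s ^ card (exponent_support n js))"
    by (rule sum.group[symmetric]) (auto simp: exponent_support_def)
  also have "\<dots> = (\<Sum>T\<in>Pow {..<n}. real (card (?A T)) * s ^ card T)"
  proof (rule sum.cong[OF refl])
    fix T
    have "(\<Sum>js\<in>?A T. s ^ card (exponent_support n js)) = (\<Sum>js\<in>?A T. s ^ card T)"
      by (rule sum.cong) simp_all
    then show "(\<Sum>js\<in>?A T. s ^ card (exponent_support n js)) = real (card (?A T)) * s ^ card T"
      by simp
  qed
  also have "\<dots> \<le> (\<Sum>T\<in>Pow {..<n}. real (card (Ltuples d T)) * s ^ card T)"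
  proof (rule sum_mono)
    fix T assume "T \<in> Pow {..<n}"
    then have "card (?A T) \<le> card (Ltuples d T)"
      using d by (intro card_admissible_exponents_support_le) auto
    then show "real (card (?A T)) * s ^ card T \<le> real (card (Ltuples d T)) * s ^ card T"
      using \<open>s \<ge> 0\<close> by (intro mult_right_mono) simp_all
  qed
  also have "\<dots> = 1 + (\<Sum>T\<in>Pow {..<n} - {{}}. real (card (Ltuples d T)) * s ^ card T)"
    by (subst sum.remove[of _ "{}"]) simp_all
  also have "(\<Sum>T\<in>Pow {..<n} - {{}}. real (card (Ltuples d T)) * s ^ card T)
      = (\<Sum>e<n. \<Sum>S\<in>{S. S \<subseteq> {..<n} \<and> card S = n - e}. real (card (Ltuples d S)) * s ^ (n - e))"
    unfolding sum_nonempty_subsets_by_card by (rule sum.cong[OF refl], rule sum.cong) simp_all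
  finally show ?thesis .
qed

lemma sqrt_power_divide_eq_powr:
  assumes "x > 0"
  shows "sqrt x ^ k / x = x powr (real k / 2 - 1)"
proof -
  have "sqrt x ^ k = x powr (real k / 2)"
    using assms by (simp add: powr_half_sqrt[symmetric] powr_realpow[symmetric] powr_powr)
  then show ?thesis using assms by (simp add: powr_diff)
qed

locale finite_field_characters = additive_character psi + finite_field_generator g m
  for psi :: "'a::{finite,field} \<Rightarrow> complex" and g :: 'a and m :: nat
begin

definition gauss :: "nat \<Rightarrow> complex" where
  "gauss j = (\<Sum>u\<in>UNIV - {0}. cnj (chi j u) * psi u)"

lemma gauss_0: "gauss 0 = - 1"
  using sum_psi_nonzero[of 1] by (simp add: gauss_def)

lemma norm_gauss:
  assumes "0 < j" "j < m"
  shows "norm (gauss j) = sqrt CARD('a)"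
  unfolding gauss_def
proof (rule norm_gauss_sum)
  show "cnj (chi j (x * y)) = cnj (chi j x) * cnj (chi j y)" if "x \<noteq> 0" "y \<noteq> 0" for x y
    using chi_mult[OF that] by simp
  show "norm (cnj (chi j x)) = 1" for x by simp
  have "\<not> m dvd j" using assms by (auto dest: dvd_imp_le)
  then show "(\<Sum>x\<in>UNIV - {0}. cnj (chi j x)) = 0"
    unfolding cnj_sum[symmetric] sum_chi by simp
qed

lemma sum_psi_monomial:
  assumes "c \<noteq> 0"
  shows "(\<Sum>y\<in>UNIV - {0}. psi (c * y ^ d)) = (\<Sum>j\<in>char_exponents m d. chi j c * gauss j)"
proof -
  have "(\<Sum>y\<in>UNIV - {0}. psi (c * y ^ d))
      = (\<Sum>z\<in>UNIV - {0}. \<Sum>y\<in>{y \<in> UNIV - {0}. y ^ d = z}. psi (c * y ^ d))"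
    by (rule sum.group[symmetric]) auto
  also have "\<dots> = (\<Sum>z\<in>UNIV - {0}. of_nat (card {y \<in> UNIV - {0}. y ^ d = z}) * psi (c * z))"
    by (intro sum.cong refl) simp
  also have "\<dots> = (\<Sum>z\<in>UNIV - {0}. \<Sum>j\<in>char_exponents m d. cnj (chi j z) * psi (c * z))"
  proof (rule sum.cong[OF refl])
    fix z :: 'a assume "z \<in> UNIV - {0}"
    then show "of_nat (card {y \<in> UNIV - {0}. y ^ d = z}) * psi (c * z)
        = (\<Sum>j\<in>char_exponents m d. cnj (chi j z) * psi (c * z))"
      using card_power_fibre[of z d] by (simp add: sum_distrib_right)
  qed
  also have "\<dots> = (\<Sum>j\<in>char_exponents m d. \<Sum>z\<in>UNIV - {0}. cnj (chi j z) * psi (c * z))"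
    by (rule sum.swap)
  also have "\<dots> = (\<Sum>j\<in>char_exponents m d. chi j c * gauss j)"
  proof (rule sum.cong[OF refl])
    fix j
    have "gauss j = (\<Sum>z\<in>UNIV - {0}. cnj (chi j (c * z)) * psi (c * z))"
      unfolding gauss_def by (rule sum_nonzero_reindex_mult[OF assms, symmetric])
    also have "\<dots> = (\<Sum>z\<in>UNIV - {0}. cnj (chi j c) * (cnj (chi j z) * psi (c * z)))"
      using assms by (intro sum.cong refl) (simp add: chi_mult)
    also have "\<dots> = cnj (chi j c) * (\<Sum>z\<in>UNIV - {0}. cnj (chi j z) * psi (c * z))"
      by (rule sum_distrib_left[symmetric])
    finally have "chi j c * gauss j = (chi j c * cnj (chi j c)) * (\<Sum>z\<in>UNIV - {0}. cnj (chi j z) * psi (c * z))"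
      by (simp only: mult.assoc)
    then show "(\<Sum>z\<in>UNIV - {0}. cnj (chi j z) * psi (c * z)) = chi j c * gauss j"
      by (simp add: chi_cnj)
  qed
  finally show ?thesis .
qed

lemma prod_sum_psi_monomials:
  fixes n :: nat and a :: "nat \<Rightarrow> 'a" and d :: "nat \<Rightarrow> nat"
  assumes "t \<noteq> 0" and a: "\<And>i. i < n \<Longrightarrow> a i \<noteq> 0"
  shows "(\<Prod>i<n. \<Sum>y\<in>UNIV - {0}. psi (t * a i * y ^ d i))
    = (\<Sum>js\<in>Pi\<^sub>E {..<n} (\<lambda>i. char_exponents m (d i)).
         chi (\<Sum>i<n. js i) t * (\<Prod>i<n. chi (js i) (a i) * gauss (js i)))"
proof -
  have "(\<Prod>i<n. \<Sum>y\<in>UNIV - {0}. psi (t * a i * y ^ d i))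
      = (\<Prod>i<n. \<Sum>j\<in>char_exponents m (d i). chi j (t * a i) * gauss j)"
    using assms by (intro prod.cong refl sum_psi_monomial) auto
  also have "\<dots> = (\<Sum>js\<in>Pi\<^sub>E {..<n} (\<lambda>i. char_exponents m (d i)). \<Prod>i<n. chi (js i) (t * a i) * gauss (js i))"
    by (rule prod_sum_PiE) simp_all
  also have "\<dots> = (\<Sum>js\<in>Pi\<^sub>E {..<n} (\<lambda>i. char_exponents m (d i)).
         chi (\<Sum>i<n. js i) t * (\<Prod>i<n. chi (js i) (a i) * gauss (js i)))"
  proof (rule sum.cong[OF refl])
    fix js :: "nat \<Rightarrow> nat"
    have "(\<Prod>i<n. chi (js i) (t * a i) * gauss (js i))
        = (\<Prod>i<n. chi (js i) t * (chi (js i) (a i) * gauss (js i)))"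
      using assms by (intro prod.cong refl) (simp add: chi_mult)
    then show "(\<Prod>i<n. chi (js i) (t * a i) * gauss (js i))
        = chi (\<Sum>i<n. js i) t * (\<Prod>i<n. chi (js i) (a i) * gauss (js i))"
      by (simp add: prod.distrib chi_sum)
  qed
  finally show ?thesis .
qed

lemma N0star_character_identity:
  fixes a :: "nat \<Rightarrow> 'a"
  assumes a: "\<And>i. i < n \<Longrightarrow> a i \<noteq> 0"
  shows "of_nat CARD('a) * of_nat (N0star n a d)
    = of_nat m ^ n + of_nat m * (\<Sum>js\<in>admissible_exponents m n d. \<Prod>i<n. chi (js i) (a i) * gauss (js i))"
proof -
  let ?P = "Pi\<^sub>E {..<n} (\<lambda>_. UNIV - {0::'a})"
  let ?J = "Pi\<^sub>E {..<n} (\<lambda>i. char_exponents m (d i))"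
  let ?f = "\<lambda>x. \<Sum>i<n. a i * x i ^ d i"
  let ?T = "\<lambda>js. \<Prod>i<n. chi (js i) (a i) * gauss (js i)"
  have "of_nat CARD('a) * of_nat (N0star n a d) = (\<Sum>x\<in>{x \<in> ?P. ?f x = 0}. of_nat CARD('a) :: complex)"
    unfolding N0star_def sum_constant by (rule mult.commute)
  also have "\<dots> = (\<Sum>x\<in>?P. if ?f x = 0 then of_nat CARD('a) else 0)"
    by (rule sum.inter_filter) (simp add: finite_PiE)
  also have "\<dots> = (\<Sum>x\<in>?P. \<Sum>t\<in>UNIV. psi (t * ?f x))"
    by (intro sum.cong refl) (simp add: sum_psi mult.commute[of _ "?f _"])
  also have "\<dots> = (\<Sum>t\<in>UNIV. \<Sum>x\<in>?P. psi (t * ?f x))"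
    by (rule sum.swap)
  also have "\<dots> = (\<Sum>t\<in>UNIV. \<Prod>i<n. \<Sum>y\<in>UNIV - {0}. psi (t * a i * y ^ d i))"
  proof (rule sum.cong[OF refl])
    fix t
    have "(\<Sum>x\<in>?P. psi (t * ?f x)) = (\<Sum>x\<in>?P. \<Prod>i<n. psi (t * a i * x i ^ d i))"
      by (simp add: sum_distrib_left psi_sum mult.assoc)
    also have "\<dots> = (\<Prod>i<n. \<Sum>y\<in>UNIV - {0}. psi (t * a i * y ^ d i))"
      by (rule prod_sum_PiE[symmetric]) simp_all
    finally show "(\<Sum>x\<in>?P. psi (t * ?f x)) = (\<Prod>i<n. \<Sum>y\<in>UNIV - {0}. psi (t * a i * y ^ d i))" .
  qed
  also have "\<dots> = of_nat m ^ n + (\<Sum>t\<in>UNIV - {0}. \<Prod>i<n. \<Sum>y\<in>UNIV - {0}. psi (t * a i * y ^ d i))"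
    by (subst sum.remove[of _ 0]) (simp_all add: m_def card_Diff_singleton)
  also have "(\<Sum>t\<in>UNIV - {0}. \<Prod>i<n. \<Sum>y\<in>UNIV - {0}. psi (t * a i * y ^ d i))
      = (\<Sum>t\<in>UNIV - {0}. \<Sum>js\<in>?J. chi (\<Sum>i<n. js i) t * ?T js)"
    using a by (intro sum.cong[OF refl] prod_sum_psi_monomials) auto
  also have "\<dots> = (\<Sum>js\<in>?J. (\<Sum>t\<in>UNIV - {0}. chi (\<Sum>i<n. js i) t) * ?T js)"
    by (subst sum.swap) (simp add: sum_distrib_right)
  also have "\<dots> = (\<Sum>js\<in>?J. if m dvd (\<Sum>i<n. js i) then of_nat m * ?T js else 0)"
    by (rule sum.cong[OF refl]) (simp add: sum_chi)
  also have "\<dots> = of_nat m * (\<Sum>js\<in>admissible_exponents m n d. ?T js)"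
    unfolding admissible_exponents_def sum_distrib_left by (simp add: sum.inter_filter finite_PiE)
  finally show ?thesis .
qed

lemma norm_admissible_term:
  fixes a :: "nat \<Rightarrow> 'a"
  assumes "js \<in> admissible_exponents m n d"
  shows "norm (\<Prod>i<n. chi (js i) (a i) * gauss (js i)) = sqrt CARD('a) ^ card (exponent_support n js)"
proof -
  have "norm (\<Prod>i<n. chi (js i) (a i) * gauss (js i)) = (\<Prod>i<n. norm (gauss (js i)))"
    by (simp add: prod_norm[symmetric] norm_mult)
  also have "\<dots> = (\<Prod>i<n. if js i \<noteq> 0 then sqrt CARD('a) else 1)"
  proof (rule prod.cong[OF refl])
    fix i assume "i \<in> {..<n}"
    then have "js i < m" using assms by (auto simp: admissible_exponents_def char_exponents_def)
    then show "norm (gauss (js i)) = (if js i \<noteq> 0 then sqrt CARD('a) else 1)"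
      by (simp add: gauss_0 norm_gauss)
  qed
  also have "\<dots> = sqrt CARD('a) ^ card (exponent_support n js)"
    by (simp add: prod.inter_filter[symmetric] exponent_support_def lessThan_def conj_commute)
  finally show ?thesis .
qed

lemma N0star_deviation:
  fixes a :: "nat \<Rightarrow> 'a"
  assumes d: "\<And>i. i < n \<Longrightarrow> d i > 0" and a: "\<And>i. i < n \<Longrightarrow> a i \<noteq> 0"
  shows "\<bar>real CARD('a) * real (N0star n a d) - real m ^ n\<bar>
    \<le> real m * (1 + (\<Sum>e<n. \<Sum>S\<in>{S. S \<subseteq> {..<n} \<and> card S = n - e}.
                      real (card (Ltuples d S)) * sqrt CARD('a) ^ (n - e)))"
proof -
  let ?E = "\<Sum>js\<in>admissible_exponents m n d. \<Prod>i<n. chi (js i) (a i) * gauss (js i)"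
  have "complex_of_real (real CARD('a) * real (N0star n a d) - real m ^ n)
      = of_nat CARD('a) * of_nat (N0star n a d) - of_nat m ^ n"
    by (simp only: of_real_diff of_real_mult of_real_power of_real_of_nat_eq)
  also have "\<dots> = of_nat m * ?E"
    using N0star_character_identity[OF a] by (simp only: add_diff_cancel_left')
  finally have "norm (complex_of_real (real CARD('a) * real (N0star n a d) - real m ^ n))
      = norm (of_nat m * ?E)" by (rule arg_cong)
  then have eq: "\<bar>real CARD('a) * real (N0star n a d) - real m ^ n\<bar> = real m * norm ?E"
    by (simp only: norm_of_real norm_mult norm_of_nat)
  have "norm ?E \<le> (\<Sum>js\<in>admissible_exponents m n d. norm (\<Prod>i<n. chi (js i) (a i) * gauss (js i)))"
    by (rule norm_sum)
  also have "\<dots> = (\<Sum>js\<in>admissible_exponents m n d. sqrt CARD('a) ^ card (exponent_support n js))"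
    by (rule sum.cong[OF refl]) (rule norm_admissible_term)
  also have "\<dots> \<le> 1 + (\<Sum>e<n. \<Sum>S\<in>{S. S \<subseteq> {..<n} \<and> card S = n - e}.
                      real (card (Ltuples d S)) * sqrt CARD('a) ^ (n - e))"
    by (rule sum_support_power_le) (simp_all add: d)
  finally show ?thesis unfolding eq by (rule mult_left_mono) simp
qed

end

theorem mainTheorem9:
  fixes n :: nat and d :: "nat \<Rightarrow> nat" and a :: "nat \<Rightarrow> 'a::{finite,field}"
  assumes "\<And>i. i < n \<Longrightarrow> d i > 0"
    and "\<And>i. i < n \<Longrightarrow> a i \<noteq> 0"
  shows "\<bar>real (N0star n a d) - (real (card (UNIV::'a set)) - 1) ^ n / real (card (UNIV::'a set))\<bar>
    \<le> (real (card (UNIV::'a set)) - 1) / real (card (UNIV::'a set))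
       + (\<Sum>e<n. \<Sum>S\<in>{S. S \<subseteq> {..<n} \<and> card S = n - e}.
            real (card (Ltuples d S)) * (real (card (UNIV::'a set)) - 1)
              * real (card (UNIV::'a set)) powr (real (n - e) / 2 - 1))"
proof -
  obtain g :: 'a where "g \<noteq> 0" "bij_betw (\<lambda>k. g ^ k) {..<CARD('a) - 1} (UNIV - {0})"
    using finite_field_generator_exists by blast
  moreover obtain psi :: "'a \<Rightarrow> complex"
    where "\<And>x y. psi (x + y) = psi x * psi y" "\<And>x. norm (psi x) = 1" "psi 1 \<noteq> 1"
    using nontrivial_additive_character_exists by blast
  ultimately interpret finite_field_characters psi g "CARD('a) - 1"
    by unfold_locales simp_all
  define q where "q = real CARD('a)"
  have "q > 0" and m: "real (CARD('a) - 1) = q - 1"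
    using card_finite_field_ge_2[where 'a='a] by (simp_all add: q_def of_nat_diff)
  let ?B = "\<Sum>e<n. \<Sum>S\<in>{S. S \<subseteq> {..<n} \<and> card S = n - e}. real (card (Ltuples d S)) * sqrt q ^ (n - e)"
  have "\<bar>real (N0star n a d) - (q - 1) ^ n / q\<bar> = \<bar>q * real (N0star n a d) - (q - 1) ^ n\<bar> / q"
    using \<open>q > 0\<close> by (simp add: field_simps)
  also have "\<dots> \<le> (q - 1) * (1 + ?B) / q"
    using N0star_deviation[OF assms] \<open>q > 0\<close> unfolding m q_def by (simp add: divide_right_mono)
  also have "(q - 1) * (1 + ?B) / q = (q - 1) / q + (\<Sum>e<n. \<Sum>S\<in>{S. S \<subseteq> {..<n} \<and> card S = n - e}.
      real (card (Ltuples d S)) * (q - 1) * q powr (real (n - e) / 2 - 1))"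
    unfolding sqrt_power_divide_eq_powr[OF \<open>q > 0\<close>, symmetric]
    by (simp add: distrib_left add_divide_distrib sum_distrib_left sum_divide_distrib mult_ac)
  finally show ?thesis unfolding q_def .
qed

end
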